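(* Let $n\ge1$, $N=\{1,\dots,n\}$, $A=[0,1]$. Any OWA mechanism that satisfies proportionality (P) also satisfies proportional fairness (PF), and therefore unanimous fair share (UFS).
   Context: A mechanism is a map $f:A^n\to A$ from profiles $x=(x_i)_{i\in N}$ of reported locations to a facility location. An OWA mechanism has weights $w_1,\dots,w_n\in[0,1]$ with $\sum_j w_j=1$ and returns $f(x)=\sum_{j=1}^n w_j x_{\pi(j)}$, where $\pi$ is a permutation of $N$ with $x_{\pi(1)}\le\dots\le x_{\pi(n)}$. P: for every $x\in\{0,1\}^n$, $f(x)=\#\{i\in N: x_i=1\}/n$. PF: for every $x\in A^n$, every nonempty $S\subseteq N$ and every $i\in S$, $|x_i-f(x)|\le 1-\frac{|S|}{n}+r_S$ where $r_S=\max_{j\in S}x_j-\min_{j\in S}x_j$. UFS: for every $x\in A^n$, every nonempty $S\subseteq N$ such that all $x_j$, $j\in S$, are equal, and every $i\in S$, $|x_i-f(x)|\le 1-\frac{|S|}{n}$. *)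

theory Defs
  imports Complex_Main
begin

text \<open>Agents are indexed by 0,...,n-1; a profile is a list of length n of reals.
  A = [0,1].\<close>

definition profiles :: "nat \<Rightarrow> real set \<Rightarrow> real list set" where
  "profiles n A = {x. length x = n \<and> set x \<subseteq> A}"

definition owa_weights :: "nat \<Rightarrow> (nat \<Rightarrow> real) \<Rightarrow> bool" where
  "owa_weights n w \<longleftrightarrow> (\<forall>j<n. 0 \<le> w j \<and> w j \<le> 1) \<and> (\<Sum>j<n. w j) = 1"

definition owa :: "nat \<Rightarrow> (nat \<Rightarrow> real) \<Rightarrow> real list \<Rightarrow> real" where
  "owa n w x = (\<Sum>j<n. w j * sort x ! j)"

definition prop_P :: "nat \<Rightarrow> (real list \<Rightarrow> real) \<Rightarrow> bool" where
  "prop_P n f \<longleftrightarrow> (\<forall>x \<in> profiles n {0,1}.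
      f x = real (card {i. i < n \<and> x ! i = 1}) / real n)"

definition range_of :: "real list \<Rightarrow> nat set \<Rightarrow> real" where
  "range_of x S = Max ((!) x ` S) - Min ((!) x ` S)"

definition prop_PF :: "nat \<Rightarrow> (real list \<Rightarrow> real) \<Rightarrow> bool" where
  "prop_PF n f \<longleftrightarrow> (\<forall>x \<in> profiles n {0..1}. \<forall>S. S \<subseteq> {..<n} \<and> S \<noteq> {} \<longrightarrow>
      (\<forall>i\<in>S. \<bar>x ! i - f x\<bar> \<le> 1 - real (card S) / real n + range_of x S))"

definition prop_UFS :: "nat \<Rightarrow> (real list \<Rightarrow> real) \<Rightarrow> bool" where
  "prop_UFS n f \<longleftrightarrow> (\<forall>x \<in> profiles n {0..1}. \<forall>S. S \<subseteq> {..<n} \<and> S \<noteq> {} \<and>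
      (\<forall>j\<in>S. \<forall>k\<in>S. x ! j = x ! k) \<longrightarrow>
      (\<forall>i\<in>S. \<bar>x ! i - f x\<bar> \<le> 1 - real (card S) / real n))"

end

theory Submission
  imports Defs "HOL-Library.Multiset"
begin

text \<open>On the 0/1 profile with exactly k ones, an OWA mechanism returns the sum of its top k
  weights, while P demands k/n; comparing consecutive k forces every weight to be 1/n. So the
  mechanism is the mean, and the mean is within 1 - |S|/n + r_S of each report in S: the reports
  in S differ from x_i by at most r_S, the other n - |S| reports by at most 1.\<close>

lemma owa_threshold_profile:
  assumes "k \<le> n"
  shows "owa n w (replicate (n - k) 0 @ replicate k 1) = (\<Sum>j\<in>{n-k..<n}. w j)"
proof -
  let ?x = "replicate (n - k) (0::real) @ replicate k 1"
  have "sort ?x = ?x"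
    by (rule sorted_sort_id) (auto simp: sorted_append)
  then have "owa n w ?x = (\<Sum>j<n. if j < n - k then 0 else w j)"
    unfolding owa_def using assms by (intro sum.cong) (auto simp: nth_append)
  also have "\<dots> = (\<Sum>j\<in>{n-k..<n}. w j)"
    by (subst sum.If_cases) (auto intro!: sum.cong)
  finally show ?thesis .
qed

lemma owa_top_weights_sum:
  assumes P: "prop_P n (owa n w)" and "k \<le> n"
  shows "(\<Sum>j\<in>{n-k..<n}. w j) = real k / real n"
proof -
  let ?x = "replicate (n - k) (0::real) @ replicate k 1"
  have "?x \<in> profiles n {0,1}"
    using \<open>k \<le> n\<close> by (auto simp: profiles_def)
  then have "owa n w ?x = real (card {i. i < n \<and> ?x ! i = 1}) / real n"
    using P unfolding prop_P_def by blast
  also have "{i. i < n \<and> ?x ! i = 1} = {n-k..<n}"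
    using \<open>k \<le> n\<close> by (auto simp: nth_append)
  finally show ?thesis
    using owa_threshold_profile[OF \<open>k \<le> n\<close>, of w] \<open>k \<le> n\<close> by simp
qed

lemma prop_P_owa_uniform_weights:
  assumes P: "prop_P n (owa n w)" and "j < n"
  shows "w j = 1 / real n"
proof -
  have "{j..<n} = insert j {Suc j..<n}"
    using \<open>j < n\<close> by auto
  then have "(\<Sum>i\<in>{j..<n}. w i) = w j + (\<Sum>i\<in>{Suc j..<n}. w i)"
    by simp
  moreover have "(\<Sum>i\<in>{j..<n}. w i) = real (n - j) / real n"
    using owa_top_weights_sum[OF P, of "n - j"] \<open>j < n\<close> by simp
  moreover have "(\<Sum>i\<in>{Suc j..<n}. w i) = real (n - Suc j) / real n"
    using owa_top_weights_sum[OF P, of "n - Suc j"] \<open>j < n\<close> by (simp add: Suc_diff_Suc)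
  ultimately have "w j = real (n - j) / real n - real (n - Suc j) / real n"
    by linarith
  also have "\<dots> = 1 / real n"
    using \<open>j < n\<close> by (simp add: diff_divide_distrib[symmetric])
  finally show ?thesis .
qed

lemma owa_constant_weights:
  assumes "\<And>j. j < n \<Longrightarrow> w j = c" and "length x = n"
  shows "owa n w x = c * sum_list x"
proof -
  have "owa n w x = c * (\<Sum>j<n. sort x ! j)"
    unfolding owa_def using assms(1) by (simp add: sum_distrib_left)
  also have "(\<Sum>j<n. sort x ! j) = sum_list (sort x)"
    using assms(2) by (simp add: sum_list_sum_nth lessThan_atLeast0)
  also have "\<dots> = sum_list x"
    by (metis mset_sort sum_mset_sum_list)
  finally show ?thesis .
qed

lemma nth_diff_le_range_of:
  assumes "finite S" and "i \<in> S" and "j \<in> S"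
  shows "\<bar>x ! i - x ! j\<bar> \<le> range_of x S"
proof -
  have "x ! i \<le> Max ((!) x ` S)" "x ! j \<le> Max ((!) x ` S)"
    "Min ((!) x ` S) \<le> x ! i" "Min ((!) x ` S) \<le> x ! j"
    using assms by auto
  then show ?thesis
    unfolding range_of_def by linarith
qed

lemma range_of_const:
  assumes "i \<in> S" and "\<forall>j\<in>S. x ! j = x ! i"
  shows "range_of x S = 0"
proof -
  have "(!) x ` S = {x ! i}"
    using assms by blast
  then show ?thesis
    by (simp add: range_of_def)
qed

lemma mean_deviation_le:
  fixes x :: "real list"
  assumes "x \<in> profiles n {0..1}" and S: "S \<subseteq> {..<n}" and "i \<in> S"
  shows "\<bar>x ! i - sum_list x / real n\<bar> \<le> 1 - real (card S) / real n + range_of x S"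
proof -
  define r where "r = range_of x S"
  have len: "length x = n" and "set x \<subseteq> {0..1}"
    using assms(1) by (auto simp: profiles_def)
  then have unit: "x ! j \<in> {0..1}" if "j < n" for j
    using that nth_mem by blast
  have "finite S" and "card S \<le> n" and "i < n"
    using S \<open>i \<in> S\<close> finite_subset card_mono[of "{..<n}" S] by auto
  have near: "\<bar>x ! i - x ! j\<bar> \<le> r" if "j \<in> S" for j
    unfolding r_def using nth_diff_le_range_of[OF \<open>finite S\<close> \<open>i \<in> S\<close> that] .
  then have "r \<ge> 0"
    using \<open>i \<in> S\<close> by force
  have far: "\<bar>x ! i - x ! j\<bar> \<le> 1" if "j < n" for j
    using unit[OF that] unit[OF \<open>i < n\<close>] by auto
  have "real n * (x ! i - sum_list x / real n) = (\<Sum>j<n. x ! i - x ! j)"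
    using \<open>i < n\<close> len by (simp add: sum_subtractf sum_list_sum_nth lessThan_atLeast0 right_diff_distrib)
  then have "real n * \<bar>x ! i - sum_list x / real n\<bar> = \<bar>\<Sum>j<n. x ! i - x ! j\<bar>"
    by (metis abs_mult abs_of_nat)
  also have "\<dots> \<le> (\<Sum>j<n. \<bar>x ! i - x ! j\<bar>)"
    by (rule sum_abs)
  also have "\<dots> = (\<Sum>j\<in>S. \<bar>x ! i - x ! j\<bar>) + (\<Sum>j\<in>{..<n}-S. \<bar>x ! i - x ! j\<bar>)"
    using S by (metis finite_lessThan sum.subset_diff add.commute)
  also have "\<dots> \<le> (\<Sum>j\<in>S. r) + (\<Sum>j\<in>{..<n}-S. 1)"
    by (intro add_mono sum_mono) (auto intro: near far)
  also have "\<dots> = real (card S) * r + (real n - real (card S))"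
    using S \<open>finite S\<close> \<open>card S \<le> n\<close> by (simp add: card_Diff_subset)
  also have "\<dots> \<le> real n * (1 - real (card S) / real n + r)"
    using \<open>i < n\<close> \<open>card S \<le> n\<close> \<open>r \<ge> 0\<close> mult_right_mono[of "card S" n r]
    by (simp add: algebra_simps)
  finally show ?thesis
    unfolding r_def using \<open>i < n\<close> by simp
qed

lemma prop_PF_imp_prop_UFS:
  assumes "prop_PF n f"
  shows "prop_UFS n f"
  unfolding prop_UFS_def
proof (intro ballI allI impI)
  fix x S i
  assume x: "x \<in> profiles n {0..1}"
    and S: "S \<subseteq> {..<n} \<and> S \<noteq> {} \<and> (\<forall>j\<in>S. \<forall>k\<in>S. x ! j = x ! k)" and "i \<in> S"
  then have "range_of x S = 0"
    using range_of_const[OF \<open>i \<in> S\<close>] by blast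
  moreover have "\<bar>x ! i - f x\<bar> \<le> 1 - real (card S) / real n + range_of x S"
    using assms x S \<open>i \<in> S\<close> unfolding prop_PF_def by blast
  ultimately show "\<bar>x ! i - f x\<bar> \<le> 1 - real (card S) / real n"
    by simp
qed

theorem corollary2:
  fixes n :: nat and w :: "nat \<Rightarrow> real"
  assumes "n \<ge> 1"
    and "owa_weights n w"
    and "prop_P n (owa n w)"
  shows "prop_PF n (owa n w) \<and> prop_UFS n (owa n w)"
proof -
  have mean: "owa n w x = sum_list x / real n" if "x \<in> profiles n {0..1}" for x
    using owa_constant_weights[of n w "1 / real n" x] prop_P_owa_uniform_weights[OF assms(3)] that
    by (simp add: profiles_def)
  have "prop_PF n (owa n w)"
    unfolding prop_PF_def using mean mean_deviation_le by simp
  then show ?thesis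
    using prop_PF_imp_prop_UFS by blast
qed

end
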